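(* Let $(\Omega,\mathbb B(\Omega),\mu,T)$ be a measure-preserving dynamical system where $\Omega$ is an interval in $\mathbb R$ and $T$ is strong-mixing, i.e. $\lim_{n\to\infty}\mu(T^{-n}A\cap B)=\mu(A)\mu(B)$ for all $A,B\in\mathbb B(\Omega)$. Then, with $\mathrm{id}$ the identity map on $\Omega$, $$\lim_{d\to\infty}\big(h^{\mathrm{id}}_{\mu,\triangle}(T,d)-h^{\mathrm{id}}_{\mu,\mathrm{cond}}(T,d)\big)=0.$$
   Context: A measure-preserving dynamical system $(\Omega,\mathbb B(\Omega),\mu,T)$: $\mathbb B(\Omega)$ the Borel $\sigma$-algebra, $\mu$ a probability measure, $T:\Omega\to\Omega$ measurable with $\mu(T^{-1}B)=\mu(B)$. For a finite partition $\mathcal P=\{P_0,\dots,P_l\}$: $H(\mathcal P)=-\sum_P\mu(P)\ln\mu(P)$ ($0\ln0=0$), and $\mathcal P_2$ consists of the sets $P_a\cap T^{-1}(P_b)$. Let $\Pi_d$ be the set of permutations of $\{0,\dots,d\}$; $(x_0,\dots,x_d)$ has ordinal pattern $\pi=(r_0,\dots,r_d)$ if $x_{r_0}\ge\dots\ge x_{r_d}$ and $r_{l-1}>r_l$ whenever $x_{r_{l-1}}=x_{r_l}$. The ordinal partition $\mathcal P^{\mathrm{id}}(d)$ consists of the sets $P_\pi=\{\omega\in\Omega:(T^d\omega,T^{d-1}\omega,\dots,T\omega,\omega)\text{ has ordinal pattern }\pi\}$, $\pi\in\Pi_d$. Sorting entropy: $h^{\mathrm{id}}_{\mu,\triangle}(T,d)=H(\mathcal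 P^{\mathrm{id}}(d+1))-H(\mathcal P^{\mathrm{id}}(d))$. Conditional entropy of ordinal patterns: $h^{\mathrm{id}}_{\mu,\mathrm{cond}}(T,d)=H(\mathcal P^{\mathrm{id}}(d)_2)-H(\mathcal P^{\mathrm{id}}(d))$. *)

theory Defs
  imports "HOL-Probability.Probability"
begin

definition perms_of :: "nat \<Rightarrow> nat list set" where
  "perms_of d = {r. distinct r \<and> set r = {0..d}}"

definition has_ordpat :: "nat \<Rightarrow> (nat \<Rightarrow> real) \<Rightarrow> nat list \<Rightarrow> bool" where
  "has_ordpat d x r \<longleftrightarrow> r \<in> perms_of d \<and>
     (\<forall>l\<in>{1..d}. x (r ! (l - 1)) \<ge> x (r ! l) \<and>
        (x (r ! (l - 1)) = x (r ! l) \<longrightarrow> r ! (l - 1) > r ! l))"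

text \<open>P_pi: the set of omega such that (T^d omega, ..., T omega, omega) has pattern pi,
  i.e. x_i = T^(d-i) omega.\<close>
definition ord_set :: "real measure \<Rightarrow> (real \<Rightarrow> real) \<Rightarrow> nat \<Rightarrow> nat list \<Rightarrow> real set" where
  "ord_set M T d r = {\<omega> \<in> space M. has_ordpat d (\<lambda>i. (T ^^ (d - i)) \<omega>) r}"

text \<open>Entropy of a finite partition given as an indexed family of pairwise disjoint sets
  (0 ln 0 = 0 holds since ln 0 = 0 in Isabelle).\<close>
definition part_entropy :: "'a measure \<Rightarrow> ('i \<Rightarrow> 'a set) \<Rightarrow> 'i set \<Rightarrow> real" where
  "part_entropy M P I = - (\<Sum>i\<in>I. measure M (P i) * ln (measure M (P i)))"

definition H_ord :: "real measure \<Rightarrow> (real \<Rightarrow> real) \<Rightarrow> nat \<Rightarrow> real" where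
  "H_ord M T d = part_entropy M (ord_set M T d) (perms_of d)"

definition H_ord2 :: "real measure \<Rightarrow> (real \<Rightarrow> real) \<Rightarrow> nat \<Rightarrow> real" where
  "H_ord2 M T d = part_entropy M
     (\<lambda>(a, b). ord_set M T d a \<inter> (T -` ord_set M T d b \<inter> space M))
     (perms_of d \<times> perms_of d)"

definition sorting_entropy :: "real measure \<Rightarrow> (real \<Rightarrow> real) \<Rightarrow> nat \<Rightarrow> real" where
  "sorting_entropy M T d = H_ord M T (Suc d) - H_ord M T d"

definition cond_entropy_ord :: "real measure \<Rightarrow> (real \<Rightarrow> real) \<Rightarrow> nat \<Rightarrow> real" where
  "cond_entropy_ord M T d = H_ord2 M T d - H_ord M T d"

end

theory Submission
  imports Defs
begin

(* The ordinal pattern of (T^(d+1) w, ..., T w, w) is determined by the pattern of its first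
   d+1 entries, the pattern of its last d+1 entries and the comparison of its endpoints
   w and T^(d+1) w.  Hence the partition P(d+1) is the refinement of P(d)_2 by the set
   {w < T^(d+1) w}, and H(P(d+1)) - H(P(d)_2) is the sum, over the blocks of P(d)_2, of the
   entropy gained by cutting each block in two.  Each gain lies between 0 and ln 2 times the
   mass of the block and vanishes unless the block is really cut, which only happens on
   "unseparated" points: those w for which no T^j w with 1 <= j <= d lies strictly between
   w and T^(d+1) w.  So 0 <= gap d <= ln 2 * mu(unseparated d).

   If mu has no atoms, cut the line into n cells of mass 1/(n+2).  An unseparated point either
   has an endpoint in one of the two tails, or misses a whole cell for d steps (mixing makes
   this unlikely for large d), or has both endpoints in two adjacent cells (which by mixing
   has probability about (2/(n+2))^2 per pair).  Hence mu(unseparated d) -> 0.  If mu has an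
   atom, mixing forces it to be a Dirac measure, and then every entropy vanishes. *)

definition precedes :: "(nat \<Rightarrow> real) \<Rightarrow> nat \<Rightarrow> nat \<Rightarrow> bool" where
  "precedes x i j \<longleftrightarrow> x j < x i \<or> (x i = x j \<and> j < i)"

lemma precedes_irrefl: "\<not> precedes x i i"
  by (auto simp: precedes_def)

lemma precedes_trans: "precedes x i j \<Longrightarrow> precedes x j k \<Longrightarrow> precedes x i k"
  by (auto simp: precedes_def)

lemma precedes_flip: "i \<noteq> j \<Longrightarrow> precedes x j i \<longleftrightarrow> \<not> precedes x i j"
  by (auto simp: precedes_def)

lemma precedes_shift: "precedes (\<lambda>i. x (Suc i)) i j \<longleftrightarrow> precedes x (Suc i) (Suc j)"
  by (auto simp: precedes_def)

definition rank :: "(nat \<Rightarrow> real) \<Rightarrow> nat \<Rightarrow> nat \<Rightarrow> nat" where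
  "rank x d i = card {j\<in>{0..d}. precedes x j i}"

lemma rank_less_iff:
  assumes "i \<le> d" "j \<le> d"
  shows "rank x d i < rank x d j \<longleftrightarrow> precedes x i j"
proof -
  have strict: "rank x d i < rank x d j" if "precedes x i j" "i \<le> d" for i j
  proof -
    have "{k\<in>{0..d}. precedes x k i} \<subset> {k\<in>{0..d}. precedes x k j}"
      using that precedes_trans[of x _ i j] precedes_irrefl[of x i] by auto
    then show ?thesis unfolding rank_def by (simp add: psubset_card_mono)
  qed
  show ?thesis
  proof
    assume "rank x d i < rank x d j"
    then have "i \<noteq> j" "\<not> precedes x j i" using strict[of j i] assms(2) by auto
    then show "precedes x i j" using precedes_flip[of i j x] by blast
  qed (use strict assms in blast)
qed

lemma rank_inj_on: "inj_on (rank x d) {0..d}"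
proof (rule inj_onI)
  fix i j assume "i \<in> {0..d}" "j \<in> {0..d}" "rank x d i = rank x d j"
  then show "i = j"
    using rank_less_iff[of i d j x] rank_less_iff[of j d i x] precedes_flip[of i j x] by auto
qed

lemma perms_of_length: "r \<in> perms_of d \<Longrightarrow> length r = Suc d"
  unfolding perms_of_def using distinct_card by fastforce

lemma finite_perms_of: "finite (perms_of d)"
proof (rule finite_subset)
  show "perms_of d \<subseteq> {xs. set xs \<subseteq> {0..d} \<and> length xs \<le> Suc d}"
    using perms_of_length unfolding perms_of_def by auto
qed (rule finite_lists_length_le, simp)

lemma has_ordpat_iff_sorted:
  "has_ordpat d x r \<longleftrightarrow> r \<in> perms_of d \<and> sorted_wrt (precedes x) r"
proof (cases "r \<in> perms_of d")
  case True
  have "transp (precedes x)" by (auto simp: transp_def intro: precedes_trans)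
  moreover have "length r = Suc d" using perms_of_length[OF True] .
  ultimately have "sorted_wrt (precedes x) r \<longleftrightarrow> (\<forall>i<d. precedes x (r ! i) (r ! Suc i))"
    by (simp add: sorted_wrt_iff_nth_Suc_transp)
  also have "\<dots> \<longleftrightarrow> (\<forall>l\<in>{1..d}. precedes x (r ! (l - 1)) (r ! l))"
  proof (intro iffI ballI allI impI)
    fix i assume "\<forall>l\<in>{1..d}. precedes x (r ! (l - 1)) (r ! l)" "i < d"
    moreover have "Suc i \<in> {1..d}" using \<open>i < d\<close> by simp
    ultimately show "precedes x (r ! i) (r ! Suc i)" by fastforce
  next
    fix l :: nat assume "\<forall>i<d. precedes x (r ! i) (r ! Suc i)" "l \<in> {1..d}"
    moreover obtain i where "l = Suc i" "i < d" using \<open>l \<in> {1..d}\<close> by (cases l) auto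
    ultimately show "precedes x (r ! (l - 1)) (r ! l)" by simp
  qed
  finally have "sorted_wrt (precedes x) r \<longleftrightarrow> (\<forall>l\<in>{1..d}. precedes x (r ! (l - 1)) (r ! l))" .
  then show ?thesis using True unfolding has_ordpat_def precedes_def by auto
qed (simp add: has_ordpat_def)

lemma sorted_precedes_iff_sorted_rank:
  assumes "set r \<subseteq> {0..d}"
  shows "sorted_wrt (precedes x) r \<longleftrightarrow> sorted_wrt (<) (map (rank x d) r)"
proof -
  have "precedes x i j \<longleftrightarrow> rank x d i < rank x d j" if "i \<in> set r" "j \<in> set r" for i j
    using that assms by (intro rank_less_iff[symmetric]) auto
  then show ?thesis
    unfolding sorted_wrt_map by (metis (no_types, lifting) sorted_wrt_mono_rel)
qed

lemma ordpat_exists: "\<exists>r. has_ordpat d x r"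
proof -
  define r where "r = sort_key (rank x d) [0..<Suc d]"
  have r: "r \<in> perms_of d" unfolding r_def perms_of_def by auto
  then have "distinct (map (rank x d) r)"
    using rank_inj_on by (auto simp: perms_of_def distinct_map)
  then have "sorted_wrt (<) (map (rank x d) r)"
    unfolding strict_sorted_iff r_def by simp
  then show ?thesis
    using r sorted_precedes_iff_sorted_rank[of r d x]
    by (auto simp: perms_of_def has_ordpat_iff_sorted)
qed

lemma ordpat_unique:
  assumes "has_ordpat d x r" "has_ordpat d x r'"
  shows "r = r'"
proof (rule map_sorted_distinct_set_unique[of "rank x d"])
  have sets: "set r = {0..d}" "set r' = {0..d}"
    using assms by (auto simp: has_ordpat_def perms_of_def)
  then show "inj_on (rank x d) (set r \<union> set r')" "set r = set r'" using rank_inj_on by auto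
  have "sorted_wrt (<) (map (rank x d) r)" "sorted_wrt (<) (map (rank x d) r')"
    using assms sets sorted_precedes_iff_sorted_rank[of _ d x] by (auto simp: has_ordpat_iff_sorted)
  then show "sorted (map (rank x d) r)" "distinct (map (rank x d) r)"
    "sorted (map (rank x d) r')" "distinct (map (rank x d) r')"
    by (simp_all add: strict_sorted_iff)
qed

definition same_order :: "nat \<Rightarrow> (nat \<Rightarrow> real) \<Rightarrow> (nat \<Rightarrow> real) \<Rightarrow> bool" where
  "same_order d x y \<longleftrightarrow> (\<forall>i\<le>d. \<forall>j\<le>d. precedes x i j \<longleftrightarrow> precedes y i j)"

lemma same_order_iff_same_ordpat:
  assumes x: "has_ordpat d x r"
  shows "has_ordpat d y r \<longleftrightarrow> same_order d x y"
proof
  assume y: "has_ordpat d y r"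
  show "same_order d x y" unfolding same_order_def
  proof (intro allI impI)
    fix i j assume "i \<le> d" "j \<le> d"
    moreover have "set r = {0..d}" using x by (simp add: has_ordpat_def perms_of_def)
    ultimately have "i \<in> set r" "j \<in> set r" by auto
    then obtain p q where pq: "p < length r" "q < length r" "r ! p = i" "r ! q = j"
      by (metis in_set_conv_nth)
    have sorted: "sorted_wrt (precedes x) r" "sorted_wrt (precedes y) r"
      using x y by (auto simp: has_ordpat_iff_sorted)
    consider "p < q" | "p = q" | "q < p" by linarith
    then show "precedes x i j \<longleftrightarrow> precedes y i j"
    proof cases
      case 1
      then show ?thesis using sorted[THEN sorted_wrt_nth_less, OF 1 pq(2)] pq by simp
    next
      case 3
      then have "precedes x j i" "precedes y j i"
        using sorted[THEN sorted_wrt_nth_less, OF 3 pq(1)] pq by simp_all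
      then show ?thesis using precedes_flip precedes_irrefl by metis
    qed (use pq precedes_irrefl in simp)
  qed
next
  assume same: "same_order d x y"
  have r: "r \<in> perms_of d" and "sorted_wrt (precedes x) r"
    using x by (auto simp: has_ordpat_iff_sorted)
  moreover have "sorted_wrt (precedes y) r"
    by (rule sorted_wrt_mono_rel[OF _ \<open>sorted_wrt (precedes x) r\<close>])
       (use same r in \<open>auto simp: same_order_def perms_of_def\<close>)
  ultimately show "has_ordpat d y r" by (simp add: has_ordpat_iff_sorted)
qed

lemma same_order_iff_all_ordpat:
  "same_order d x y \<longleftrightarrow> (\<forall>r. has_ordpat d x r \<longleftrightarrow> has_ordpat d y r)"
proof -
  obtain r where r: "has_ordpat d x r" using ordpat_exists by blast
  have "same_order d y x \<longleftrightarrow> same_order d x y" by (auto simp: same_order_def)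
  then show ?thesis
    using r same_order_iff_same_ordpat[OF r] same_order_iff_same_ordpat[of d y]
    by (metis ordpat_unique)
qed

lemma has_ordpat_cong:
  assumes "\<And>i. i \<le> d \<Longrightarrow> x i = y i"
  shows "has_ordpat d x r \<longleftrightarrow> has_ordpat d y r"
proof -
  have "same_order d x y" using assms by (simp add: same_order_def precedes_def)
  then show ?thesis by (simp add: same_order_iff_all_ordpat)
qed

lemma same_order_Suc_iff:
  "same_order (Suc d) x y \<longleftrightarrow>
     same_order d x y \<and> same_order d (\<lambda>i. x (Suc i)) (\<lambda>i. y (Suc i)) \<and>
     (precedes x 0 (Suc d) \<longleftrightarrow> precedes y 0 (Suc d))"
proof
  assume "same_order (Suc d) x y"
  then show "same_order d x y \<and> same_order d (\<lambda>i. x (Suc i)) (\<lambda>i. y (Suc i)) \<and>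
     (precedes x 0 (Suc d) \<longleftrightarrow> precedes y 0 (Suc d))"
    unfolding same_order_def precedes_shift by auto
next
  assume parts: "same_order d x y \<and> same_order d (\<lambda>i. x (Suc i)) (\<lambda>i. y (Suc i)) \<and>
     (precedes x 0 (Suc d) \<longleftrightarrow> precedes y 0 (Suc d))"
  show "same_order (Suc d) x y" unfolding same_order_def
  proof (intro allI impI)
    fix i j assume ij: "i \<le> Suc d" "j \<le> Suc d"
    consider "i \<le> d \<and> j \<le> d" | "0 < i \<and> 0 < j" | "i = 0 \<and> j = Suc d" | "i = Suc d \<and> j = 0"
      using ij by linarith
    then show "precedes x i j \<longleftrightarrow> precedes y i j"
    proof cases
      case 2
      then obtain i' j' where "i = Suc i'" "j = Suc j'" "i' \<le> d" "j' \<le> d"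
        using ij by (metis Suc_le_mono gr0_implies_Suc)
      then show ?thesis using parts unfolding same_order_def precedes_shift by simp
    next
      case 4
      then show ?thesis using parts precedes_flip[of 0 "Suc d"] by simp
    qed (use parts in \<open>auto simp: same_order_def\<close>)
  qed
qed

definition xlnx :: "real \<Rightarrow> real" where
  "xlnx t = t * ln t"

lemma xlnx_0 [simp]: "xlnx 0 = 0" and xlnx_1 [simp]: "xlnx 1 = 0"
  by (simp_all add: xlnx_def)

lemma part_entropy_xlnx: "part_entropy M P I = - (\<Sum>i\<in>I. xlnx (measure M (P i)))"
  by (simp add: part_entropy_def xlnx_def sum_negf)

lemma xlnx_split_bounds:
  fixes x y :: real
  assumes "0 \<le> x" "0 \<le> y"
  shows "0 \<le> xlnx (x + y) - xlnx x - xlnx y" "xlnx (x + y) - xlnx x - xlnx y \<le> (x + y) * ln 2"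
proof -
  have "0 \<le> xlnx (x + y) - xlnx x - xlnx y \<and> xlnx (x + y) - xlnx x - xlnx y \<le> (x + y) * ln 2"
  proof (cases "x = 0 \<or> y = 0")
    case True
    then show ?thesis using assms by (auto simp: xlnx_def)
  next
    case False
    then have x: "x > 0" and y: "y > 0" using assms by auto
    have split: "xlnx (x + y) - xlnx x - xlnx y = x * ln ((x + y) / x) + y * ln ((x + y) / y)"
      using x y by (simp add: xlnx_def ln_div algebra_simps)
    have "x * ln ((x + y) / (2 * x)) + y * ln ((x + y) / (2 * y))
        \<le> x * ((x + y) / (2 * x) - 1) + y * ((x + y) / (2 * y) - 1)"
      using x y by (intro add_mono mult_left_mono ln_le_minus_one) auto
    also have "\<dots> = 0" using x y by (simp add: field_simps)
    finally have "x * ln ((x + y) / x) + y * ln ((x + y) / y) \<le> (x + y) * ln 2"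
      using x y by (simp add: ln_div ln_mult algebra_simps)
    moreover have "0 \<le> x * ln ((x + y) / x) + y * ln ((x + y) / y)"
      using x y by (intro add_nonneg_nonneg mult_nonneg_nonneg) auto
    ultimately show ?thesis using split by simp
  qed
  then show "0 \<le> xlnx (x + y) - xlnx x - xlnx y" "xlnx (x + y) - xlnx x - xlnx y \<le> (x + y) * ln 2"
    by auto
qed

lemma sum_xlnx_inside_block:
  assumes "finite K" "disjoint_family_on C K" "k0 \<in> K" "A \<subseteq> C k0"
  shows "(\<Sum>k\<in>K. xlnx (measure M (A \<inter> C k))) = xlnx (measure M A)"
proof -
  have "A \<inter> C k = {}" if "k \<in> K - {k0}" for k
    using that assms(2-4) by (auto simp: disjoint_family_on_def)
  then have "(\<Sum>k\<in>K. xlnx (measure M (A \<inter> C k))) = xlnx (measure M (A \<inter> C k0))"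
    using assms(1,3) by (simp add: sum.remove)
  also have "A \<inter> C k0 = A" using assms(4) by blast
  finally show ?thesis .
qed

lemma part_entropy_same_blocks:
  assumes fin: "finite R" "finite K"
    and disj: "disjoint_family_on P R" "disjoint_family_on C K"
    and PC: "\<And>r. r \<in> R \<Longrightarrow> P r \<noteq> {} \<Longrightarrow> \<exists>k\<in>K. P r \<subseteq> C k"
    and CP: "\<And>k. k \<in> K \<Longrightarrow> C k \<noteq> {} \<Longrightarrow> \<exists>r\<in>R. C k \<subseteq> P r"
  shows "part_entropy M P R = part_entropy M C K"
proof -
  have "(\<Sum>r\<in>R. xlnx (measure M (P r))) = (\<Sum>r\<in>R. \<Sum>k\<in>K. xlnx (measure M (P r \<inter> C k)))"
  proof (intro sum.cong refl)
    fix r assume "r \<in> R"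
    then show "xlnx (measure M (P r)) = (\<Sum>k\<in>K. xlnx (measure M (P r \<inter> C k)))"
      using PC[of r] sum_xlnx_inside_block[OF fin(2) disj(2)] by (cases "P r = {}") auto
  qed
  also have "\<dots> = (\<Sum>k\<in>K. \<Sum>r\<in>R. xlnx (measure M (C k \<inter> P r)))"
    by (subst sum.swap) (simp add: Int_commute)
  also have "\<dots> = (\<Sum>k\<in>K. xlnx (measure M (C k)))"
  proof (intro sum.cong refl)
    fix k assume "k \<in> K"
    then show "(\<Sum>r\<in>R. xlnx (measure M (C k \<inter> P r))) = xlnx (measure M (C k))"
      using CP[of k] sum_xlnx_inside_block[OF fin(1) disj(1)] by (cases "C k = {}") auto
  qed
  finally show ?thesis by (simp add: part_entropy_xlnx)
qed

(* Without atoms the distribution function of the identity is continuous, so it attains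
   every value strictly between 0 and 1. *)
lemma nonatomic_quantile:
  fixes M :: "real measure"
  assumes "prob_space M" "(\<lambda>x. x) \<in> borel_measurable M" "\<And>p. measure M {p} = 0"
    and y: "0 < y" "y < 1"
  shows "\<exists>t. measure M {\<omega>\<in>space M. \<omega> \<le> t} = y"
proof -
  let ?D = "distr M borel (\<lambda>x. x)"
  interpret D: real_distribution ?D
    using assms(1,2)
    by (simp add: real_distribution_def real_distribution_axioms_def prob_space.prob_space_distr)
  have measure_D: "measure ?D A = measure M {\<omega>\<in>space M. \<omega> \<in> A}" if "A \<in> sets borel" for A
    using that assms(2) by (simp add: measure_distr vimage_def Int_def conj_commute)
  have "{\<omega>\<in>space M. \<omega> \<in> {t}} = (if t \<in> space M then {t} else {})" for t
    by auto
  then have "isCont (cdf ?D) t" for t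
    using measure_D[of "{t}"] assms(3)[of t] by (simp add: D.isCont_cdf)
  moreover obtain a where "cdf ?D a < y"
    using order_tendstoD(2)[OF D.cdf_lim_at_bot y(1)] by (auto simp: eventually_at_bot_linorder)
  moreover obtain b where "y < cdf ?D b" "a \<le> b"
    using order_tendstoD(1)[OF D.cdf_lim_at_top_prob y(2)]
    by (auto simp: eventually_at_top_linorder) (metis linorder_le_cases order_refl)
  ultimately obtain t where "cdf ?D t = y"
    using IVT[of "cdf ?D" a y b] by (auto intro: less_imp_le)
  then show ?thesis using measure_D[of "{..t}"] by (auto simp: cdf_def)
qed

lemma equal_mass_cuts:
  fixes M :: "real measure"
  assumes "prob_space M" and id_borel: "(\<lambda>x. x) \<in> borel_measurable M" and "\<And>p. measure M {p} = 0"
  shows "\<exists>c. (\<forall>k l. k < l \<and> l \<le> n \<longrightarrow> c k < c l) \<and>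
    (\<forall>k\<le>n. measure M {\<omega>\<in>space M. \<omega> \<le> c k} = (real k + 1) / (real n + 2))"
proof -
  have "\<forall>k. \<exists>t. k \<le> n \<longrightarrow> measure M {\<omega>\<in>space M. \<omega> \<le> t} = (real k + 1) / (real n + 2)"
    using nonatomic_quantile[OF assms] by simp
  then obtain c where c: "\<And>k. k \<le> n \<Longrightarrow> measure M {\<omega>\<in>space M. \<omega> \<le> c k} = (real k + 1) / (real n + 2)"
    by metis
  have "c k < c l" if "k < l" "l \<le> n" for k l
  proof (rule ccontr)
    assume "\<not> c k < c l"
    moreover have [measurable]: "(\<lambda>x. x) \<in> borel_measurable M" by (fact id_borel)
    ultimately have "measure M {\<omega>\<in>space M. \<omega> \<le> c l} \<le> measure M {\<omega>\<in>space M. \<omega> \<le> c k}"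
      using assms(1) by (intro prob_space.finite_measure finite_measure.finite_measure_mono) auto
    moreover have "(real k + 1) / (real n + 2) < (real l + 1) / (real n + 2)"
      using that by (intro divide_strict_right_mono) auto
    ultimately show False using c[of k] c[of l] that by simp
  qed
  then show ?thesis using c by blast
qed

lemma crossing_index:
  fixes c :: "nat \<Rightarrow> real"
  shows "c 0 < u \<Longrightarrow> u \<le> c n \<Longrightarrow> \<exists>p<n. c p < u \<and> u \<le> c (Suc p)"
proof (induction n)
  case (Suc n)
  then show ?case by (cases "u \<le> c n") (auto intro: less_SucI)
qed simp

lemma cells_between_or_adjacent:
  fixes c :: "nat \<Rightarrow> real"
  assumes mono: "\<forall>k l. k < l \<and> l \<le> n \<longrightarrow> c k < c l" and "2 \<le> n"
    and "c 0 < u" "u \<le> v" "v \<le> c n"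
  shows "(\<exists>j<n. u \<le> c j \<and> c (Suc j) < v) \<or> (\<exists>k<n - 1. c k < u \<and> v \<le> c (k + 2))"
proof -
  obtain p where p: "p < n" "c p < u" "u \<le> c (Suc p)"
    using crossing_index[of c u n] assms by force
  show ?thesis
  proof (cases "Suc (Suc p) \<le> n")
    case True
    show ?thesis
    proof (cases "c (Suc (Suc p)) < v")
      case True
      then show ?thesis using p \<open>Suc (Suc p) \<le> n\<close> by (intro disjI1 exI[of _ "Suc p"]) auto
    next
      case False
      then show ?thesis
        using p \<open>Suc (Suc p) \<le> n\<close> by (intro disjI2 exI[of _ p]) (auto simp: numeral_2_eq_2)
    qed
  next
    case False
    then have "Suc p = n" "1 \<le> p" using p \<open>2 \<le> n\<close> by auto
    moreover have "c (p - 1) < c p" using mono \<open>1 \<le> p\<close> \<open>p < n\<close> by simp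
    moreover have "p - 1 + 2 = n" "p - 1 < n - 1" using \<open>Suc p = n\<close> \<open>1 \<le> p\<close> by auto
    ultimately show ?thesis using p assms(5)
      by (intro disjI2 exI[of _ "p - 1"]) auto
  qed
qed

locale real_dynamics = prob_space M for M :: "real measure" +
  fixes T :: "real \<Rightarrow> real"
  assumes ident_borel [measurable]: "(\<lambda>x. x) \<in> borel_measurable M"
    and T_measurable [measurable]: "T \<in> measurable M M"
begin

definition window :: "nat \<Rightarrow> real \<Rightarrow> nat \<Rightarrow> real" where
  "window d \<omega> i = (T ^^ (Suc d - i)) \<omega>"

definition block2 :: "nat \<Rightarrow> nat list \<Rightarrow> nat list \<Rightarrow> real set" where
  "block2 d a b = ord_set M T d a \<inter> (T -` ord_set M T d b \<inter> space M)"

(* The set on which the endpoints of the window increase; it refines P(d)_2 to P(d+1). *)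
definition ascent :: "nat \<Rightarrow> real set" where
  "ascent d = {\<omega>\<in>space M. \<omega> < (T ^^ Suc d) \<omega>}"

definition split_block :: "nat \<Rightarrow> nat list \<times> nat list \<Rightarrow> bool \<Rightarrow> real set" where
  "split_block d ab e = block2 d (fst ab) (snd ab) \<inter> (if e then ascent d else space M - ascent d)"

definition unseparated :: "nat \<Rightarrow> real set" where
  "unseparated d = {\<omega>\<in>space M. \<forall>j\<in>{1..d}.
      \<not> (\<omega> < (T ^^ j) \<omega> \<and> (T ^^ j) \<omega> < (T ^^ Suc d) \<omega>) \<and>
      \<not> ((T ^^ Suc d) \<omega> < (T ^^ j) \<omega> \<and> (T ^^ j) \<omega> < \<omega>)}"

lemma funpow_measurable [measurable]: "T ^^ n \<in> measurable M M"
  using T_measurable by (rule measurable_compose_n)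

lemma funpow_borel [measurable]: "(\<lambda>\<omega>. (T ^^ n) \<omega>) \<in> borel_measurable M"
  using measurable_compose[OF funpow_measurable ident_borel] by simp

lemma ord_set_measurable [measurable]: "ord_set M T d r \<in> sets M"
proof -
  have "Measurable.pred M (\<lambda>\<omega>. has_ordpat d (\<lambda>i. (T ^^ (d - i)) \<omega>) r)"
    unfolding has_ordpat_def by measurable
  then show ?thesis unfolding ord_set_def pred_def .
qed

lemma block2_measurable [measurable]: "block2 d a b \<in> sets M"
  unfolding block2_def using measurable_sets[OF T_measurable ord_set_measurable] by measurable

lemma ascent_measurable [measurable]: "ascent d \<in> sets M"
  unfolding ascent_def by measurable

lemma split_block_measurable [measurable]: "split_block d ab e \<in> sets M"
  unfolding split_block_def by (cases e) auto

lemma unseparated_measurable [measurable]: "unseparated d \<in> sets M"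
  unfolding unseparated_def by measurable

lemma ord_set_Suc_iff:
  "\<omega> \<in> ord_set M T (Suc d) r \<longleftrightarrow> \<omega> \<in> space M \<and> has_ordpat (Suc d) (window d \<omega>) r"
  unfolding ord_set_def window_def by simp

lemma block2_iff:
  "\<omega> \<in> block2 d a b \<longleftrightarrow>
     \<omega> \<in> space M \<and> has_ordpat d (\<lambda>i. window d \<omega> (Suc i)) a \<and> has_ordpat d (window d \<omega>) b"
proof -
  have "(T ^^ (d - i)) (T \<omega>) = window d \<omega> i" if "i \<le> d" for i
    using that by (simp add: window_def Suc_diff_le funpow_Suc_right del: funpow.simps)
  then have "has_ordpat d (\<lambda>i. (T ^^ (d - i)) (T \<omega>)) b \<longleftrightarrow> has_ordpat d (window d \<omega>) b"
    by (rule has_ordpat_cong)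
  moreover have "(\<lambda>i. (T ^^ (d - i)) \<omega>) = (\<lambda>i. window d \<omega> (Suc i))"
    by (simp add: window_def)
  moreover have "\<omega> \<in> space M \<Longrightarrow> T \<omega> \<in> space M"
    using measurable_space[OF T_measurable] .
  ultimately show ?thesis unfolding block2_def ord_set_def by auto
qed

lemma ascent_iff: "\<omega> \<in> ascent d \<longleftrightarrow> \<omega> \<in> space M \<and> precedes (window d \<omega>) 0 (Suc d)"
  by (auto simp: ascent_def precedes_def window_def)

lemma block2_same_order:
  assumes "\<omega> \<in> block2 d a b"
  shows "\<omega>' \<in> block2 d a b \<longleftrightarrow> \<omega>' \<in> space M \<and>
    same_order d (window d \<omega>) (window d \<omega>') \<and>
    same_order d (\<lambda>i. window d \<omega> (Suc i)) (\<lambda>i. window d \<omega>' (Suc i))"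
proof -
  from assms have a: "has_ordpat d (\<lambda>i. window d \<omega> (Suc i)) a" and b: "has_ordpat d (window d \<omega>) b"
    by (simp_all add: block2_iff)
  show ?thesis
    by (auto simp: block2_iff same_order_iff_same_ordpat[OF a] same_order_iff_same_ordpat[OF b])
qed

lemma block2_unique: "\<omega> \<in> block2 d a b \<Longrightarrow> \<omega> \<in> block2 d a' b' \<Longrightarrow> a = a' \<and> b = b'"
  using ordpat_unique by (auto simp: block2_iff)

lemma block2_exists: "\<omega> \<in> space M \<Longrightarrow> \<exists>a\<in>perms_of d. \<exists>b\<in>perms_of d. \<omega> \<in> block2 d a b"
proof -
  assume "\<omega> \<in> space M"
  moreover obtain a where "has_ordpat d (\<lambda>i. window d \<omega> (Suc i)) a" using ordpat_exists by blast
  moreover obtain b where "has_ordpat d (window d \<omega>) b" using ordpat_exists by blast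
  ultimately show ?thesis unfolding block2_iff has_ordpat_def by blast
qed

lemma split_block_unique:
  "\<omega> \<in> split_block d ab e \<Longrightarrow> \<omega> \<in> split_block d ab' e' \<Longrightarrow> ab = ab' \<and> e = e'"
  using block2_unique[of \<omega> d "fst ab" "snd ab" "fst ab'" "snd ab'"]
  by (auto simp: split_block_def prod_eq_iff split: if_splits)

(* Both P(d+1) and the refinement of P(d)_2 by the ascent set are the classes of
   order-equivalence of windows. *)
lemma split_block_same_order:
  assumes "\<omega> \<in> split_block d ab e"
  shows "\<omega>' \<in> split_block d ab e \<longleftrightarrow> \<omega>' \<in> space M \<and> same_order (Suc d) (window d \<omega>) (window d \<omega>')"
  using assms block2_same_order[of \<omega> d "fst ab" "snd ab" \<omega>']
  by (cases e) (auto simp: split_block_def same_order_Suc_iff ascent_iff)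

lemma ord_set_Suc_same_order:
  assumes "\<omega> \<in> ord_set M T (Suc d) r"
  shows "\<omega>' \<in> ord_set M T (Suc d) r \<longleftrightarrow> \<omega>' \<in> space M \<and> same_order (Suc d) (window d \<omega>) (window d \<omega>')"
proof -
  from assms have r: "has_ordpat (Suc d) (window d \<omega>) r" by (simp add: ord_set_Suc_iff)
  show ?thesis by (simp add: ord_set_Suc_iff same_order_iff_same_ordpat[OF r])
qed

lemma H_ord_Suc_eq_split:
  "H_ord M T (Suc d) =
     part_entropy M (\<lambda>(ab, e). split_block d ab e) ((perms_of d \<times> perms_of d) \<times> UNIV)"
  unfolding H_ord_def
proof (rule part_entropy_same_blocks)
  show "finite (perms_of (Suc d))" "finite ((perms_of d \<times> perms_of d) \<times> (UNIV :: bool set))"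
    by (simp_all add: finite_perms_of)
  show "disjoint_family_on (ord_set M T (Suc d)) (perms_of (Suc d))"
    unfolding disjoint_family_on_def by (auto simp: ord_set_Suc_iff dest: ordpat_unique)
  show "disjoint_family_on (\<lambda>(ab, e). split_block d ab e) ((perms_of d \<times> perms_of d) \<times> UNIV)"
    unfolding disjoint_family_on_def by (auto simp: split_beta prod_eq_iff dest: split_block_unique)
next
  fix r assume "ord_set M T (Suc d) r \<noteq> {}"
  then obtain \<omega>0 where \<omega>0: "\<omega>0 \<in> ord_set M T (Suc d) r" by blast
  then have "\<omega>0 \<in> space M" by (simp add: ord_set_Suc_iff)
  then obtain a b where ab: "a \<in> perms_of d" "b \<in> perms_of d" "\<omega>0 \<in> block2 d a b"
    using block2_exists by blast
  then have "\<omega>0 \<in> split_block d (a, b) (\<omega>0 \<in> ascent d)"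
    using \<open>\<omega>0 \<in> space M\<close> by (simp add: split_block_def)
  then have "ord_set M T (Suc d) r \<subseteq> split_block d (a, b) (\<omega>0 \<in> ascent d)"
    using ord_set_Suc_same_order[OF \<omega>0] split_block_same_order by blast
  then show "\<exists>k\<in>(perms_of d \<times> perms_of d) \<times> UNIV.
      ord_set M T (Suc d) r \<subseteq> (case k of (ab, e) \<Rightarrow> split_block d ab e)"
    using ab by force
next
  fix k :: "(nat list \<times> nat list) \<times> bool"
  assume "(case k of (ab, e) \<Rightarrow> split_block d ab e) \<noteq> {}"
  then obtain \<omega>0 where \<omega>0: "\<omega>0 \<in> split_block d (fst k) (snd k)" by (auto simp: split_beta)
  obtain r where r: "has_ordpat (Suc d) (window d \<omega>0) r" using ordpat_exists by blast
  then have "\<omega>0 \<in> ord_set M T (Suc d) r"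
    using \<omega>0 by (simp add: ord_set_Suc_iff split_block_def block2_iff)
  then have "split_block d (fst k) (snd k) \<subseteq> ord_set M T (Suc d) r"
    using ord_set_Suc_same_order split_block_same_order[OF \<omega>0] by blast
  moreover have "r \<in> perms_of (Suc d)" using r by (simp add: has_ordpat_def)
  ultimately show "\<exists>r\<in>perms_of (Suc d).
      (case k of (ab, e) \<Rightarrow> split_block d ab e) \<subseteq> ord_set M T (Suc d) r"
    by (auto simp: split_beta)
qed

definition split_gain :: "nat \<Rightarrow> nat list \<times> nat list \<Rightarrow> real" where
  "split_gain d ab = xlnx (measure M (block2 d (fst ab) (snd ab)))
     - xlnx (measure M (split_block d ab True)) - xlnx (measure M (split_block d ab False))"

lemma entropy_gap_eq:
  "sorting_entropy M T d - cond_entropy_ord M T d = (\<Sum>ab\<in>perms_of d \<times> perms_of d. split_gain d ab)"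
proof -
  have "H_ord M T (Suc d) = - (\<Sum>ab\<in>perms_of d \<times> perms_of d.
      xlnx (measure M (split_block d ab True)) + xlnx (measure M (split_block d ab False)))"
  proof -
    have "(\<Sum>k\<in>(perms_of d \<times> perms_of d) \<times> UNIV.
          xlnx (measure M (case k of (ab, e) \<Rightarrow> split_block d ab e)))
        = (\<Sum>ab\<in>perms_of d \<times> perms_of d. \<Sum>e\<in>UNIV. xlnx (measure M (split_block d ab e)))"
      by (simp add: sum.cartesian_product split_def)
    then show ?thesis
      unfolding H_ord_Suc_eq_split part_entropy_xlnx by (simp add: UNIV_bool add.commute)
  qed
  moreover have "H_ord2 M T d =
      - (\<Sum>ab\<in>perms_of d \<times> perms_of d. xlnx (measure M (block2 d (fst ab) (snd ab))))"
    unfolding H_ord2_def part_entropy_xlnx block2_def by (simp add: split_beta)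
  ultimately show ?thesis
    unfolding sorting_entropy_def cond_entropy_ord_def split_gain_def
    by (simp add: sum_subtractf sum.distrib)
qed

lemma block2_measure_split:
  "measure M (block2 d (fst ab) (snd ab)) =
     measure M (split_block d ab True) + measure M (split_block d ab False)"
proof -
  have "block2 d (fst ab) (snd ab) = split_block d ab True \<union> split_block d ab False"
    by (auto simp: split_block_def block2_iff)
  moreover have "split_block d ab True \<inter> split_block d ab False = {}"
    by (auto simp: split_block_def)
  ultimately show ?thesis by (simp add: finite_measure_Union)
qed

(* If a block contains points on both sides of the ascent set, the whole block is
   unseparated: an intermediate orbit value strictly between the endpoints would fix the
   endpoint comparison through the patterns shared by all points of the block. *)
lemma mixed_block_unseparated:
  assumes \<omega>1: "\<omega>1 \<in> block2 d a b \<inter> ascent d" and \<omega>2: "\<omega>2 \<in> block2 d a b - ascent d"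
    and \<omega>: "\<omega> \<in> block2 d a b"
  shows "\<omega> \<in> unseparated d"
proof (rule ccontr)
  assume "\<omega> \<notin> unseparated d"
  moreover have sp: "\<omega> \<in> space M" "\<omega>1 \<in> space M" "\<omega>2 \<in> space M"
    using \<omega> \<omega>1 \<omega>2 by (auto simp: block2_iff)
  ultimately obtain j where j: "j \<in> {1..d}" and between:
    "(\<omega> < (T ^^ j) \<omega> \<and> (T ^^ j) \<omega> < (T ^^ Suc d) \<omega>) \<or>
     ((T ^^ Suc d) \<omega> < (T ^^ j) \<omega> \<and> (T ^^ j) \<omega> < \<omega>)"
    unfolding unseparated_def by auto
  define i where "i = d - j"
  have i: "i < d" "window d \<omega> (Suc i) = (T ^^ j) \<omega>"
    using j by (auto simp: i_def window_def Suc_diff_le)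
  have vals: "window d \<omega> 0 = (T ^^ Suc d) \<omega>" "window d \<omega> (Suc d) = \<omega>" by (simp_all add: window_def)
  have shared: "(precedes (window d \<omega>') 0 (Suc i) \<longleftrightarrow> precedes (window d \<omega>) 0 (Suc i)) \<and>
      (precedes (window d \<omega>') (Suc i) (Suc d) \<longleftrightarrow> precedes (window d \<omega>) (Suc i) (Suc d))"
    if "\<omega>' \<in> block2 d a b" for \<omega>'
    using that block2_same_order[OF \<omega>, of \<omega>'] i(1) unfolding same_order_def precedes_shift
    by (metis Suc_leI le_refl less_imp_le_nat zero_le)
  from between show False
  proof
    assume "\<omega> < (T ^^ j) \<omega> \<and> (T ^^ j) \<omega> < (T ^^ Suc d) \<omega>"
    then have "precedes (window d \<omega>2) 0 (Suc i)" "precedes (window d \<omega>2) (Suc i) (Suc d)"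
      using shared[of \<omega>2] \<omega>2 i vals by (auto simp: precedes_def)
    then show False using \<omega>2 sp(3) precedes_trans by (auto simp: ascent_iff)
  next
    assume "(T ^^ Suc d) \<omega> < (T ^^ j) \<omega> \<and> (T ^^ j) \<omega> < \<omega>"
    then have "\<not> precedes (window d \<omega>1) 0 (Suc i)" "\<not> precedes (window d \<omega>1) (Suc i) (Suc d)"
      using shared[of \<omega>1] \<omega>1 i vals by (auto simp: precedes_def)
    then have "precedes (window d \<omega>1) (Suc d) 0"
      using precedes_flip precedes_trans i(1) by (metis Suc_neq_Zero)
    then show False using \<omega>1 sp(2) precedes_flip[of 0 "Suc d"] by (auto simp: ascent_iff)
  qed
qed

lemma split_gain_bounds:
  "0 \<le> split_gain d ab \<and>
   split_gain d ab \<le> ln 2 * measure M (block2 d (fst ab) (snd ab) \<inter> unseparated d)"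
proof -
  let ?B = "block2 d (fst ab) (snd ab)"
  let ?x = "measure M (split_block d ab True)" and ?y = "measure M (split_block d ab False)"
  have gain: "split_gain d ab = xlnx (?x + ?y) - xlnx ?x - xlnx ?y"
    by (simp add: split_gain_def block2_measure_split)
  have "split_gain d ab \<le> ln 2 * measure M (?B \<inter> unseparated d)"
  proof (cases "?x = 0 \<or> ?y = 0")
    case True
    then show ?thesis using gain by auto
  next
    case False
    then have "split_block d ab True \<noteq> {}" "split_block d ab False \<noteq> {}" by auto
    then obtain \<omega>1 \<omega>2 where "\<omega>1 \<in> ?B \<inter> ascent d" "\<omega>2 \<in> ?B - ascent d"
      unfolding split_block_def by auto
    then have "?B \<inter> unseparated d = ?B" using mixed_block_unseparated by blast
    then show ?thesis
      using gain xlnx_split_bounds(2)[of ?x ?y] by (simp add: block2_measure_split mult.commute)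
  qed
  then show ?thesis using gain xlnx_split_bounds(1)[of ?x ?y] by simp
qed

lemma entropy_gap_bounds:
  "0 \<le> sorting_entropy M T d - cond_entropy_ord M T d \<and>
   sorting_entropy M T d - cond_entropy_ord M T d \<le> ln 2 * measure M (unseparated d)"
proof -
  let ?S = "perms_of d \<times> perms_of d"
  let ?U = "\<lambda>ab. block2 d (fst ab) (snd ab) \<inter> unseparated d"
  have "(\<Sum>ab\<in>?S. measure M (?U ab)) = measure M (\<Union>ab\<in>?S. ?U ab)"
  proof (rule finite_measure_finite_Union[symmetric])
    show "disjoint_family_on ?U ?S"
      unfolding disjoint_family_on_def using block2_unique by (auto simp: prod_eq_iff)
  qed (auto simp: finite_perms_of)
  also have "\<dots> \<le> measure M (unseparated d)"
    by (rule finite_measure_mono) auto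
  finally have "(\<Sum>ab\<in>?S. ln 2 * measure M (?U ab)) \<le> ln 2 * measure M (unseparated d)"
    by (simp add: sum_distrib_left[symmetric])
  moreover have "(\<Sum>ab\<in>?S. split_gain d ab) \<le> (\<Sum>ab\<in>?S. ln 2 * measure M (?U ab))"
    using split_gain_bounds by (intro sum_mono) auto
  moreover have "0 \<le> (\<Sum>ab\<in>?S. split_gain d ab)"
    using split_gain_bounds by (intro sum_nonneg) auto
  ultimately show ?thesis unfolding entropy_gap_eq by linarith
qed

lemma entropy_gap_zero_one:
  assumes "\<And>A. A \<in> sets M \<Longrightarrow> measure M A = 0 \<or> measure M A = 1"
  shows "sorting_entropy M T d - cond_entropy_ord M T d = 0"
proof -
  have "xlnx (measure M A) = 0" if "A \<in> sets M" for A
    using assms[OF that] by auto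
  then have "split_gain d ab = 0" for ab by (simp add: split_gain_def)
  then show ?thesis unfolding entropy_gap_eq by simp
qed

end

locale mixing_dynamics = real_dynamics +
  assumes T_preserving: "\<forall>B\<in>sets M. measure M (T -` B \<inter> space M) = measure M B"
    and mixing: "\<forall>A\<in>sets M. \<forall>B\<in>sets M.
      (\<lambda>n. measure M ((T ^^ n) -` A \<inter> space M \<inter> B)) \<longlonglongrightarrow> measure M A * measure M B"
begin

lemma funpow_preserving:
  assumes "B \<in> sets M"
  shows "measure M ((T ^^ n) -` B \<inter> space M) = measure M B"
proof (induction n)
  case 0
  then show ?case using sets.sets_into_space[OF assms] by (simp add: Int_absorb2)
next
  case (Suc n)
  have "(T ^^ Suc n) -` B \<inter> space M = T -` ((T ^^ n) -` B \<inter> space M) \<inter> space M"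
    using measurable_space[OF T_measurable] by (auto simp: funpow_Suc_right simp del: funpow.simps)
  then have "measure M ((T ^^ Suc n) -` B \<inter> space M) =
      measure M (T -` ((T ^^ n) -` B \<inter> space M) \<inter> space M)"
    by (simp only:)
  also have "\<dots> = measure M ((T ^^ n) -` B \<inter> space M)"
  proof -
    have "(T ^^ n) -` B \<inter> space M \<in> sets M" using assms by measurable
    then show ?thesis using T_preserving by blast
  qed
  also have "\<dots> = measure M B" by (rule Suc.IH)
  finally show ?case .
qed

definition avoiding :: "nat \<Rightarrow> real set \<Rightarrow> real set" where
  "avoiding d A = {\<omega>\<in>space M. \<forall>j\<in>{1..d}. (T ^^ j) \<omega> \<notin> A}"

lemma avoiding_measurable [measurable]:
  assumes [measurable]: "A \<in> sets M"
  shows "avoiding d A \<in> sets M"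
  unfolding avoiding_def by measurable

lemma avoiding_tendsto_0:
  assumes A: "A \<in> sets M" "measure M A > 0"
  shows "(\<lambda>d. measure M (avoiding d A)) \<longlonglongrightarrow> 0"
proof -
  define B where "B = (\<Inter>d. avoiding d A)"
  have "(\<lambda>d. measure M (avoiding d A)) \<longlonglongrightarrow> measure M B"
    unfolding B_def using A(1)
    by (intro finite_Lim_measure_decseq) (auto simp: decseq_def avoiding_def)
  moreover have "measure M B = 0"
  proof -
    have [measurable]: "B \<in> sets M" unfolding B_def using A(1) by measurable
    \<comment> \<open>Points of B never enter A, so the correlations of A and B vanish;
      mixing then forces B to be null.\<close>
    have "(T ^^ Suc n) -` A \<inter> space M \<inter> B = {}" for n
      unfolding B_def avoiding_def by (auto simp del: funpow.simps dest!: spec[of _ "Suc n"])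
    moreover have "(\<lambda>n. measure M ((T ^^ Suc n) -` A \<inter> space M \<inter> B)) \<longlonglongrightarrow> measure M A * measure M B"
      using mixing A(1) by (intro LIMSEQ_Suc) simp
    ultimately have "(\<lambda>n. 0 :: real) \<longlonglongrightarrow> measure M A * measure M B" by simp
    then have "measure M A * measure M B = 0" using LIMSEQ_unique tendsto_const by blast
    then show ?thesis using A(2) by simp
  qed
  ultimately show ?thesis by simp
qed

definition cell :: "real \<Rightarrow> real \<Rightarrow> real set" where
  "cell s t = {\<omega>\<in>space M. s < \<omega> \<and> \<omega> \<le> t}"

definition returning :: "nat \<Rightarrow> real set \<Rightarrow> real set" where
  "returning n A = (T ^^ n) -` A \<inter> space M \<inter> A"

lemma cell_measurable [measurable]: "cell s t \<in> sets M"
  unfolding cell_def by measurable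

lemma returning_measurable [measurable]: "A \<in> sets M \<Longrightarrow> returning n A \<in> sets M"
  unfolding returning_def by measurable

lemma returning_tendsto:
  "A \<in> sets M \<Longrightarrow> (\<lambda>n. measure M (returning n A)) \<longlonglongrightarrow> measure M A * measure M A"
  unfolding returning_def using mixing by blast

lemma cell_measure:
  assumes "s \<le> t"
  shows "measure M (cell s t) = measure M {\<omega>\<in>space M. \<omega> \<le> t} - measure M {\<omega>\<in>space M. \<omega> \<le> s}"
proof -
  have "cell s t = {\<omega>\<in>space M. \<omega> \<le> t} - {\<omega>\<in>space M. \<omega> \<le> s}" using assms by (auto simp: cell_def)
  then show ?thesis using assms by (simp add: finite_measure_Diff subset_eq)
qed

lemma upper_measure: "measure M {\<omega>\<in>space M. t < \<omega>} = 1 - measure M {\<omega>\<in>space M. \<omega> \<le> t}"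
proof -
  have "{\<omega>\<in>space M. t < \<omega>} = space M - {\<omega>\<in>space M. \<omega> \<le> t}" by auto
  then show ?thesis using prob_space by (simp add: finite_measure_Diff subset_eq)
qed

lemma unseparated_cover:
  fixes c :: "nat \<Rightarrow> real"
  assumes mono: "\<forall>k l. k < l \<and> l \<le> n \<longrightarrow> c k < c l" and n: "2 \<le> n"
  shows "unseparated d \<subseteq> {\<omega>\<in>space M. \<omega> \<le> c 0} \<union> {\<omega>\<in>space M. c n < \<omega>}
     \<union> (T ^^ Suc d) -` {\<omega>\<in>space M. \<omega> \<le> c 0} \<inter> space M
     \<union> (T ^^ Suc d) -` {\<omega>\<in>space M. c n < \<omega>} \<inter> space M
     \<union> (\<Union>j<n. avoiding d (cell (c j) (c (Suc j))))
     \<union> (\<Union>k<n - 1. returning (Suc d) (cell (c k) (c (k + 2))))"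
proof
  fix \<omega> assume \<omega>: "\<omega> \<in> unseparated d"
  define t where "t = (T ^^ Suc d) \<omega>"
  have "\<omega> \<in> space M" using \<omega> by (simp add: unseparated_def)
  then have sp: "\<omega> \<in> space M" "t \<in> space M"
    unfolding t_def using measurable_space[OF funpow_measurable] by blast+
  have gap: "\<not> (min \<omega> t < (T ^^ j) \<omega> \<and> (T ^^ j) \<omega> < max \<omega> t)" if "j \<in> {1..d}" for j
    using \<omega> that unfolding unseparated_def t_def by (auto simp: min_def max_def)
  consider "min \<omega> t \<le> c 0 \<or> c n < max \<omega> t" | "c 0 < min \<omega> t" "max \<omega> t \<le> c n"
    by linarith
  then show "\<omega> \<in> {\<omega>\<in>space M. \<omega> \<le> c 0} \<union> {\<omega>\<in>space M. c n < \<omega>}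
     \<union> (T ^^ Suc d) -` {\<omega>\<in>space M. \<omega> \<le> c 0} \<inter> space M
     \<union> (T ^^ Suc d) -` {\<omega>\<in>space M. c n < \<omega>} \<inter> space M
     \<union> (\<Union>j<n. avoiding d (cell (c j) (c (Suc j))))
     \<union> (\<Union>k<n - 1. returning (Suc d) (cell (c k) (c (k + 2))))"
  proof cases
    case 1
    then show ?thesis using sp by (auto simp: t_def min_def max_def split: if_splits)
  next
    case 2
    have "min \<omega> t \<le> max \<omega> t" by simp
    from cells_between_or_adjacent[OF mono n 2(1) this 2(2)]
    consider j where "j < n" "min \<omega> t \<le> c j" "c (Suc j) < max \<omega> t"
      | k where "k < n - 1" "c k < min \<omega> t" "max \<omega> t \<le> c (k + 2)"
      by blast
    then show ?thesis
    proof cases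
      case (1 j)
      then have "\<omega> \<in> avoiding d (cell (c j) (c (Suc j)))"
        using gap sp by (fastforce simp: avoiding_def cell_def)
      then show ?thesis using 1 by blast
    next
      case (2 k)
      then have "\<omega> \<in> returning (Suc d) (cell (c k) (c (k + 2)))"
        using sp unfolding returning_def cell_def by (auto simp: t_def simp del: funpow.simps)
      then show ?thesis using 2 by blast
    qed
  qed
qed

(* Union bound over the covering; the two preimages have the mass of the tails by invariance. *)
lemma unseparated_measure_le:
  fixes c :: "nat \<Rightarrow> real"
  assumes mono: "\<forall>k l. k < l \<and> l \<le> n \<longrightarrow> c k < c l" and n: "2 \<le> n"
  shows "measure M (unseparated d) \<le>
      2 * measure M {\<omega>\<in>space M. \<omega> \<le> c 0} + 2 * measure M {\<omega>\<in>space M. c n < \<omega>}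
    + (\<Sum>j<n. measure M (avoiding d (cell (c j) (c (Suc j)))))
    + (\<Sum>k<n - 1. measure M (returning (Suc d) (cell (c k) (c (k + 2)))))"
proof -
  let ?L = "{\<omega>\<in>space M. \<omega> \<le> c 0}" and ?U = "{\<omega>\<in>space M. c n < \<omega>}"
  let ?L' = "(T ^^ Suc d) -` ?L \<inter> space M" and ?U' = "(T ^^ Suc d) -` ?U \<inter> space M"
  let ?A = "\<Union>j<n. avoiding d (cell (c j) (c (Suc j)))"
  let ?R = "\<Union>k<n - 1. returning (Suc d) (cell (c k) (c (k + 2)))"
  have [measurable]: "?L \<in> sets M" "?U \<in> sets M" "?L' \<in> sets M" "?U' \<in> sets M"
      "?A \<in> sets M" "?R \<in> sets M"
    by measurable
  have "measure M (unseparated d) \<le> measure M (?L \<union> ?U \<union> ?L' \<union> ?U' \<union> ?A \<union> ?R)"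
    using unseparated_cover[OF mono n] by (intro finite_measure_mono) auto
  also have "\<dots> \<le> measure M ?L + measure M ?U + measure M ?L' + measure M ?U'
      + measure M ?A + measure M ?R"
    by (intro order.trans[OF measure_Un_le] add_right_mono; simp)+
  also have "measure M ?L' = measure M ?L" by (rule funpow_preserving) measurable
  also have "measure M ?U' = measure M ?U" by (rule funpow_preserving) measurable
  also have "measure M ?A \<le> (\<Sum>j<n. measure M (avoiding d (cell (c j) (c (Suc j)))))"
    by (intro finite_measure_subadditive_finite) auto
  also have "measure M ?R \<le> (\<Sum>k<n - 1. measure M (returning (Suc d) (cell (c k) (c (k + 2)))))"
    by (intro finite_measure_subadditive_finite) auto
  finally show ?thesis by simp
qed

(* With n cells of mass h = 1/(n+2), the bound tends to 4h + (n-1)(2h)^2 < 9h. *)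
lemma unseparated_eventually_small:
  assumes nonatomic: "\<And>p. measure M {p} = 0" and n: "2 \<le> n"
  shows "eventually (\<lambda>d. measure M (unseparated d) < 9 / (real n + 2)) sequentially"
proof -
  obtain c where mono: "\<forall>k l. k < l \<and> l \<le> n \<longrightarrow> c k < c l"
    and c: "\<forall>k\<le>n. measure M {\<omega>\<in>space M. \<omega> \<le> c k} = (real k + 1) / (real n + 2)"
    using equal_mass_cuts[OF prob_space_axioms ident_borel nonatomic] by blast
  define h where "h = 1 / (real n + 2)"
  have h: "0 < h" "(real n + 2) * h = 1" by (simp_all add: h_def)
  have lower: "measure M {\<omega>\<in>space M. \<omega> \<le> c 0} = h" using c by (simp add: h_def)
  have "measure M {\<omega>\<in>space M. \<omega> \<le> c n} = (real n + 1) / (real n + 2)" using c by simp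
  then have "measure M {\<omega>\<in>space M. c n < \<omega>} = 1 - (real n + 1) / (real n + 2)"
    using upper_measure[of "c n"] by simp
  also have "\<dots> = h" by (simp add: h_def field_simps)
  finally have upper: "measure M {\<omega>\<in>space M. c n < \<omega>} = h" .
  have cells: "measure M (cell (c k) (c l)) = real (l - k) * h" if "k \<le> l" "l \<le> n" for k l
  proof -
    have "c k \<le> c l" using mono that by (cases "k = l") (auto simp: less_imp_le le_neq_implies_less)
    then have "measure M (cell (c k) (c l)) =
        (real l + 1) / (real n + 2) - (real k + 1) / (real n + 2)"
      using cell_measure c that by simp
    also have "\<dots> = (real l - real k) / (real n + 2)" by (simp add: diff_divide_distrib[symmetric])
    also have "\<dots> = real (l - k) * h" using that by (simp add: h_def of_nat_diff)
    finally show ?thesis .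
  qed
  let ?R = "\<lambda>d. 2 * h + 2 * h + (\<Sum>j<n. measure M (avoiding d (cell (c j) (c (Suc j)))))
    + (\<Sum>k<n - 1. measure M (returning (Suc d) (cell (c k) (c (k + 2)))))"
  have "?R \<longlonglongrightarrow> 2 * h + 2 * h + (\<Sum>j<n. 0) + (\<Sum>k<n - 1. (2 * h) * (2 * h))"
  proof (intro tendsto_add tendsto_const tendsto_sum)
    fix j assume "j \<in> {..<n}"
    then show "(\<lambda>d. measure M (avoiding d (cell (c j) (c (Suc j))))) \<longlonglongrightarrow> 0"
      using cells[of j "Suc j"] h by (intro avoiding_tendsto_0) auto
  next
    fix k assume "k \<in> {..<n - 1}"
    then have "measure M (cell (c k) (c (k + 2))) = 2 * h" using cells[of k "k + 2"] by simp
    then show "(\<lambda>d. measure M (returning (Suc d) (cell (c k) (c (k + 2))))) \<longlonglongrightarrow> (2 * h) * (2 * h)"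
      using returning_tendsto[of "cell (c k) (c (k + 2))", THEN LIMSEQ_Suc] by simp
  qed
  moreover have "2 * h + 2 * h + (\<Sum>j<n. 0) + (\<Sum>k<n - 1. (2 * h) * (2 * h)) < 9 * h"
  proof -
    have "(\<Sum>k<n - 1. (2 * h) * (2 * h)) = real (n - 1) * (4 * h * h)" by simp
    also have "\<dots> \<le> (real n + 2) * (4 * h * h)" using h(1) by (intro mult_right_mono) auto
    also have "\<dots> = ((real n + 2) * h) * (4 * h)" by (simp add: algebra_simps)
    finally have "(\<Sum>k<n - 1. (2 * h) * (2 * h)) \<le> ((real n + 2) * h) * (4 * h)" .
    then show ?thesis using h by simp
  qed
  ultimately have "eventually (\<lambda>d. ?R d < 9 * h) sequentially"
    by (rule order_tendstoD(2))
  moreover have "measure M (unseparated d) \<le> ?R d" for d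
    using unseparated_measure_le[OF mono n, of d] lower upper by simp
  ultimately show ?thesis
    by (auto simp: h_def elim!: eventually_mono intro: le_less_trans)
qed

lemma unseparated_tendsto_0:
  assumes "\<And>p. measure M {p} = 0"
  shows "(\<lambda>d. measure M (unseparated d)) \<longlonglongrightarrow> 0"
proof (rule order_tendstoI)
  fix a :: real assume "a < 0"
  then show "eventually (\<lambda>d. a < measure M (unseparated d)) sequentially"
    by (simp add: less_le_trans[OF _ measure_nonneg])
next
  fix a :: real assume a: "0 < a"
  define n where "n = nat \<lceil>9 / a\<rceil> + 2"
  have "9 / a < real n + 2" unfolding n_def by linarith
  then have small: "9 / (real n + 2) < a" using a by (simp add: field_simps)
  have "2 \<le> n" by (simp add: n_def)
  from unseparated_eventually_small[OF assms this]
  show "eventually (\<lambda>d. measure M (unseparated d) < a) sequentially"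
    by (rule eventually_mono) (use small in linarith)
qed

(* A mixing measure with an atom is the Dirac measure at it: the self-correlations of the
   atom only take the values 0 and m but converge to m^2 > 0, whence m = m^2. *)
lemma atom_is_full:
  assumes "measure M {p} > 0"
  shows "measure M {p} = 1"
proof -
  define m where "m = measure M {p}"
  have p: "{p} \<in> sets M" using assms measure_notin_sets by (metis less_irrefl)
  have two_values: "measure M (returning n {p}) = 0 \<or> measure M (returning n {p}) = m" for n
  proof -
    have "returning n {p} = (if (T ^^ n) p = p then {p} else {})"
      using sets.sets_into_space[OF p] by (auto simp: returning_def)
    then show ?thesis by (simp add: m_def)
  qed
  have lim: "(\<lambda>n. measure M (returning n {p})) \<longlonglongrightarrow> m * m"
    using returning_tendsto[OF p] by (simp add: m_def)
  moreover have "0 < m * m" using assms by (simp add: m_def)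
  ultimately have "eventually (\<lambda>n. 0 < measure M (returning n {p})) sequentially"
    by (rule order_tendstoD(1))
  then have "eventually (\<lambda>n. measure M (returning n {p}) = m) sequentially"
    by (rule eventually_mono) (use two_values in force)
  then have "(\<lambda>n. measure M (returning n {p})) \<longlonglongrightarrow> m"
    by (rule tendsto_eventually)
  then have "m = m * m" using lim by (rule LIMSEQ_unique)
  then have "m * (m - 1) = 0" by (simp add: algebra_simps)
  then show ?thesis using assms by (simp add: m_def)
qed

lemma atom_zero_one:
  assumes "measure M {p} > 0" "A \<in> sets M"
  shows "measure M A = 0 \<or> measure M A = 1"
proof -
  have p: "{p} \<in> sets M" using assms(1) measure_notin_sets by (metis less_irrefl)
  have p1: "measure M {p} = 1" using atom_is_full[OF assms(1)] .
  show ?thesis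
  proof (cases "p \<in> A")
    case True
    then have "measure M {p} \<le> measure M A" using assms(2) by (intro finite_measure_mono) auto
    then show ?thesis using p1 prob_le_1[of A] by simp
  next
    case False
    then have "measure M A \<le> measure M (space M - {p})"
      using assms(2) sets.sets_into_space[OF assms(2)] p by (intro finite_measure_mono) auto
    also have "\<dots> = 0"
      using p p1 prob_space sets.sets_into_space[OF p] by (simp add: finite_measure_Diff)
    finally show ?thesis by (simp add: measure_le_0_iff)
  qed
qed

theorem entropy_gap_tendsto_0:
  "(\<lambda>d. sorting_entropy M T d - cond_entropy_ord M T d) \<longlonglongrightarrow> 0"
proof (cases "\<exists>p. measure M {p} > 0")
  case True
  then obtain p where "measure M {p} > 0" by blast
  then have "sorting_entropy M T d - cond_entropy_ord M T d = 0" for d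
    by (intro entropy_gap_zero_one atom_zero_one)
  then show ?thesis by simp
next
  case False
  have "measure M {p} = 0" for p
  proof -
    have "\<not> measure M {p} > 0" using False by blast
    then show ?thesis using measure_nonneg[of M "{p}"] by linarith
  qed
  then have "(\<lambda>d. ln 2 * measure M (unseparated d)) \<longlonglongrightarrow> 0"
    by (intro tendsto_mult_right_zero unseparated_tendsto_0)
  then show ?thesis
  proof (rule tendsto_sandwich[OF _ _ tendsto_const, rotated 2])
    show "eventually (\<lambda>d. 0 \<le> sorting_entropy M T d - cond_entropy_ord M T d) sequentially"
      "eventually (\<lambda>d. sorting_entropy M T d - cond_entropy_ord M T d
          \<le> ln 2 * measure M (unseparated d)) sequentially"
      using entropy_gap_bounds by (simp_all add: always_eventually)
  qed
qed

end

theorem corollary2: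
  fixes M :: "real measure" and \<Omega> :: "real set" and T :: "real \<Rightarrow> real"
  assumes "is_interval \<Omega>"
    and "sets M = sets (restrict_space borel \<Omega>)"
    and "prob_space M"
    and "T \<in> measurable M M"
    and "\<forall>B\<in>sets M. measure M (T -` B \<inter> space M) = measure M B"
    and "\<forall>A\<in>sets M. \<forall>B\<in>sets M.
           (\<lambda>n. measure M ((T ^^ n) -` A \<inter> space M \<inter> B)) \<longlonglongrightarrow> measure M A * measure M B"
  shows "(\<lambda>d. sorting_entropy M T d - cond_entropy_ord M T d) \<longlonglongrightarrow> 0"
proof -
  have "(\<lambda>x. x) \<in> measurable (restrict_space borel \<Omega>) borel"
    by (rule measurable_restrict_space1) (rule measurable_ident_sets, rule refl)
  then have "(\<lambda>x. x) \<in> borel_measurable M"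
    by (subst measurable_cong_sets[OF assms(2) refl])
  then interpret mixing_dynamics M T
    unfolding mixing_dynamics_def mixing_dynamics_axioms_def
      real_dynamics_def real_dynamics_axioms_def
    using assms(3-6) by blast
  show ?thesis by (rule entropy_gap_tendsto_0)
qed

end
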